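(* Let $X\in\mathbb{R}^{m\times n}$ be fixed, $V=\frac1nXX^\top$, $W^K,W^Q\in\mathbb{R}^{n\times n_k}$ with i.i.d. $\mathcal N(0,1)$ entries, $Y=\frac1nXW^KW^{Q,\top}X^\top$, $\tau>0$, and $A=I+\mathrm{Softmax}(\tau^{-1}Y)-\frac1m\mathbf 1\mathbf 1^\top$ (Softmax row-wise). Then $$\mathbb{E}[A^{\alpha\delta}A^{\beta\omega}]=\delta_{\alpha\delta}\delta_{\beta\omega}+\frac{n_k}{\tau^2m^2}S_1^{\alpha\delta,\beta\omega}+\frac{n_k}{2\tau^2m}\big(\delta_{\beta\omega}S_2^{\alpha\delta}+\delta_{\alpha\delta}S_2^{\beta\omega}\big)+O(n_k\tau^{-3}).$$
   Context: $\delta_{\alpha\beta}$ is the Kronecker delta. With $V^{\alpha\bar x}=\frac1m\sum_\nu V^{\alpha\nu}$, $V^{\bar x\bar x}=\frac1{m^2}\sum_{\nu,\kappa}V^{\nu\kappa}$, $\bar V=\frac1m\sum_\nu V^{\nu\nu}$: $S_1^{\alpha\delta,\beta\omega}=V^{\alpha\beta}(V^{\delta\omega}-V^{\delta\bar x}-V^{\omega\bar x}+V^{\bar x\bar x})$ and $S_2^{\alpha\delta}=V^{\alpha\alpha}(V^{\delta\delta}-2V^{\delta\bar x}+2V^{\bar x\bar x}-\bar V)$. $O(n_k\tau^{-3})$ denotes a remainder bounded by a constant (independent of $\tau$) times $n_k\tau^{-3}$ as $\tau\to\infty$. *)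

theory Defs
  imports "HOL-Probability.Probability"
begin

(* The Gaussian weights W^K, W^Q in R^{n x nk} are encoded as one point
   w of a product space indexed by (b, i, k) :: bool * nat * nat, with
   W^K i k = w (True, i, k) and W^Q i k = w (False, i, k). *)

definition gauss_weights :: "nat \<Rightarrow> nat \<Rightarrow> (bool \<times> nat \<times> nat \<Rightarrow> real) measure" where
  "gauss_weights n nk =
     (\<Pi>\<^sub>M ijk \<in> (UNIV :: bool set) \<times> {..<n} \<times> {..<nk}. density lborel std_normal_density)"

definition WK :: "(bool \<times> nat \<times> nat \<Rightarrow> real) \<Rightarrow> nat \<Rightarrow> nat \<Rightarrow> real" where
  "WK w i k = w (True, i, k)"

definition WQ :: "(bool \<times> nat \<times> nat \<Rightarrow> real) \<Rightarrow> nat \<Rightarrow> nat \<Rightarrow> real" where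
  "WQ w i k = w (False, i, k)"

definition kdelta :: "nat \<Rightarrow> nat \<Rightarrow> real" where
  "kdelta a b = (if a = b then 1 else 0)"

definition Vmat :: "nat \<Rightarrow> (nat \<Rightarrow> nat \<Rightarrow> real) \<Rightarrow> nat \<Rightarrow> nat \<Rightarrow> real" where
  "Vmat n X a b = (1 / real n) * (\<Sum>i<n. X a i * X b i)"

definition Ymat :: "nat \<Rightarrow> nat \<Rightarrow> (nat \<Rightarrow> nat \<Rightarrow> real) \<Rightarrow> (bool \<times> nat \<times> nat \<Rightarrow> real)
                    \<Rightarrow> nat \<Rightarrow> nat \<Rightarrow> real" where
  "Ymat n nk X w a b =
     (1 / real n) * (\<Sum>i<n. \<Sum>j<n. \<Sum>k<nk. X a i * WK w i k * WQ w j k * X b j)"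

definition softmax_rows :: "nat \<Rightarrow> (nat \<Rightarrow> nat \<Rightarrow> real) \<Rightarrow> nat \<Rightarrow> nat \<Rightarrow> real" where
  "softmax_rows m M a b = exp (M a b) / (\<Sum>c<m. exp (M a c))"

definition Amat :: "nat \<Rightarrow> nat \<Rightarrow> nat \<Rightarrow> (nat \<Rightarrow> nat \<Rightarrow> real) \<Rightarrow> real
                    \<Rightarrow> (bool \<times> nat \<times> nat \<Rightarrow> real) \<Rightarrow> nat \<Rightarrow> nat \<Rightarrow> real" where
  "Amat m n nk X tau w a b =
     kdelta a b + softmax_rows m (\<lambda>c d. Ymat n nk X w c d / tau) a b - 1 / real m"

definition Vxbar :: "nat \<Rightarrow> nat \<Rightarrow> (nat \<Rightarrow> nat \<Rightarrow> real) \<Rightarrow> nat \<Rightarrow> real" where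
  "Vxbar m n X a = (1 / real m) * (\<Sum>v<m. Vmat n X a v)"

definition Vxbarxbar :: "nat \<Rightarrow> nat \<Rightarrow> (nat \<Rightarrow> nat \<Rightarrow> real) \<Rightarrow> real" where
  "Vxbarxbar m n X = (1 / (real m)^2) * (\<Sum>v<m. \<Sum>c<m. Vmat n X v c)"

definition Vbar :: "nat \<Rightarrow> nat \<Rightarrow> (nat \<Rightarrow> nat \<Rightarrow> real) \<Rightarrow> real" where
  "Vbar m n X = (1 / real m) * (\<Sum>v<m. Vmat n X v v)"

definition S1 :: "nat \<Rightarrow> nat \<Rightarrow> (nat \<Rightarrow> nat \<Rightarrow> real) \<Rightarrow> nat \<Rightarrow> nat \<Rightarrow> nat \<Rightarrow> nat \<Rightarrow> real" where
  "S1 m n X a d b w =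
     Vmat n X a b * (Vmat n X d w - Vxbar m n X d - Vxbar m n X w + Vxbarxbar m n X)"

definition S2 :: "nat \<Rightarrow> nat \<Rightarrow> (nat \<Rightarrow> nat \<Rightarrow> real) \<Rightarrow> nat \<Rightarrow> nat \<Rightarrow> real" where
  "S2 m n X a d =
     Vmat n X a a * (Vmat n X d d - 2 * Vxbar m n X d + 2 * Vxbarxbar m n X - Vbar m n X)"

end

theory Submission
  imports Defs
begin

(* By shift invariance of the softmax, row \<alpha> of Softmax(Y/\<tau>) is the softmax of the centred
   logits y_c = (Y^{\<alpha>c} - mean_c' Y^{\<alpha>c'})/\<tau>, and a second-order Taylor expansion gives
   A^{\<alpha>\<delta>} = \<delta>_{\<alpha>\<delta>} + y_\<delta>/m + (y_\<delta>^2 - mean_c y_c^2)/(2m) + O(|y|^3).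
   Hence A^{\<alpha>\<delta>} A^{\<beta>\<omega>} is a quadratic polynomial in y up to O(|y|^3), and the
   expectation of that polynomial is computed exactly: Y is bilinear in independent standard
   Gaussians, so odd moments vanish and E[Y Y'] = n_k V V' with one factor centred, which
   produces S1 and S2. Finally |y| <= K D(w)^2/\<tau> for a function D with finite moments of all
   orders, so the remainder has expectation O(\<tau>^-3). *)

lemma prod_list_map_eq_prod_count_list:
  fixes f :: "'a \<Rightarrow> 'b::comm_monoid_mult"
  assumes "finite A" "set xs \<subseteq> A"
  shows "prod_list (map f xs) = (\<Prod>x\<in>A. f x ^ count_list xs x)"
  using assms(2)
proof (induction xs)
  case Nil
  then show ?case by simp
next
  case (Cons y xs)
  have "(\<Prod>x\<in>A. f x ^ count_list (y # xs) x) = (\<Prod>x\<in>A. (if x = y then f x else 1) * f x ^ count_list xs x)"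
    by (intro prod.cong) auto
  also have "\<dots> = f y * (\<Prod>x\<in>A. f x ^ count_list xs x)"
    using Cons.prems assms(1) by (simp add: prod.distrib prod.delta')
  finally show ?case using Cons by simp
qed

lemma sum_delta3:
  fixes f :: "nat \<Rightarrow> nat \<Rightarrow> nat \<Rightarrow> 'a::semiring_1"
  assumes "i < n" "j < n" "k < nk"
  shows "(\<Sum>i'<n. \<Sum>j'<n. \<Sum>k'<nk. f i' j' k' * of_bool (i = i' \<and> j = j' \<and> k = k')) = f i j k"
proof -
  have "f i' j' k' * of_bool (i = i' \<and> j = j' \<and> k = k')
      = (if k = k' then if j = j' then if i = i' then f i' j' k' else 0 else 0 else 0)" for i' j' k'
    by simp
  then show ?thesis
    using assms by (simp only: sum.delta' finite_lessThan lessThan_iff if_True)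
qed

lemma abs_mult_mono:
  fixes x y :: "'a::linordered_idom"
  shows "\<bar>x\<bar> \<le> a \<Longrightarrow> \<bar>y\<bar> \<le> b \<Longrightarrow> \<bar>x * y\<bar> \<le> a * b"
  unfolding abs_mult by (rule mult_mono) auto

lemma abs_sum_le_card_mult:
  fixes f :: "nat \<Rightarrow> real"
  assumes "\<And>c. c < m \<Longrightarrow> \<bar>f c\<bar> \<le> B"
  shows "\<bar>\<Sum>c<m. f c\<bar> \<le> real m * B"
  using order_trans[OF sum_abs sum_bounded_above[of "{..<m}" "\<lambda>c. \<bar>f c\<bar>" B]] assms by simp

lemma abs_integral_diff_le_integral:
  fixes f g h :: "'a \<Rightarrow> real"
  assumes "integrable M f" "integrable M g" "integrable M h"
    and "\<And>x. x \<in> space M \<Longrightarrow> \<bar>f x - g x\<bar> \<le> h x"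
  shows "\<bar>integral\<^sup>L M f - integral\<^sup>L M g\<bar> \<le> integral\<^sup>L M h"
proof -
  have "\<bar>integral\<^sup>L M f - integral\<^sup>L M g\<bar> = \<bar>\<integral>x. f x - g x \<partial>M\<bar>"
    using assms(1,2) by simp
  also have "\<dots> \<le> (\<integral>x. \<bar>f x - g x\<bar> \<partial>M)"
    using integral_norm_bound[of M "\<lambda>x. f x - g x"] by simp
  also have "\<dots> \<le> integral\<^sup>L M h"
    using assms by (intro integral_mono) auto
  finally show ?thesis .
qed

section \<open>Gaussian moments\<close>

abbreviation std_normal :: "real measure" where
  "std_normal \<equiv> density lborel std_normal_density"

lemma prob_space_std_normal: "prob_space std_normal"
  by (rule prob_space_normal_density) simp

lemma integrable_std_normal_power: "integrable std_normal (\<lambda>t. t ^ k)"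
  by (subst integrable_density) (auto simp: normal_density_nonneg integrable_std_normal_moment)

lemma integral_std_normal_power: "(\<integral>t. t ^ k \<partial>std_normal) = (\<integral>t. std_normal_density t * t ^ k \<partial>lborel)"
  by (subst integral_density) (auto simp: normal_density_nonneg)

lemma integral_std_normal_power_odd:
  assumes "odd k"
  shows "(\<integral>t. t ^ k \<partial>std_normal) = 0"
  using assms integral_std_normal_moment_odd by (auto simp: integral_std_normal_power elim!: oddE)

lemma measure_std_normal_UNIV: "measure std_normal UNIV = 1"
  using prob_space.prob_space[OF prob_space_std_normal] by simp

lemma integral_std_normal_square: "(\<integral>t. t ^ 2 \<partial>std_normal) = 1"
  using integral_std_normal_moment_even[of 1] by (simp add: integral_std_normal_power)

context
  fixes I :: "'i set"
  assumes finite_I: "finite I"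
begin

lemma has_bochner_integral_gauss_monomial:
  assumes "set ps \<subseteq> I"
  shows "has_bochner_integral (\<Pi>\<^sub>M i\<in>I. std_normal) (\<lambda>w. prod_list (map w ps))
           (\<Prod>q\<in>I. \<integral>t. t ^ count_list ps q \<partial>std_normal)"
proof -
  interpret product_prob_space "\<lambda>_. std_normal"
    by (simp add: product_prob_space_def product_prob_space_axioms_def product_sigma_finite_def
        prob_space_std_normal prob_space_imp_sigma_finite)
  show ?thesis
    unfolding prod_list_map_eq_prod_count_list[OF finite_I assms] has_bochner_integral_iff
    using product_integral_prod[of I "\<lambda>q t. t ^ count_list ps q"]
      product_integrable_prod[of I "\<lambda>q t. t ^ count_list ps q"]
    by (simp add: finite_I integrable_std_normal_power)
qed

lemma has_bochner_integral_gauss_monomial_odd: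
  assumes "set ps \<subseteq> I" and "odd (count_list ps q)"
  shows "has_bochner_integral (\<Pi>\<^sub>M i\<in>I. std_normal) (\<lambda>w. prod_list (map w ps)) 0"
proof -
  have "q \<in> I" using assms count_notin[of q ps] by (metis odd_pos neq0_conv subsetD)
  then have "(\<Prod>q\<in>I. \<integral>t. t ^ count_list ps q \<partial>std_normal) = 0"
    using finite_I assms(2) by (auto intro!: prod_zero bexI[of _ q] simp: integral_std_normal_power_odd)
  then show ?thesis using has_bochner_integral_gauss_monomial[OF assms(1)] by simp
qed

lemma has_bochner_integral_gauss_monomial_pairs:
  assumes "set ps \<subseteq> I" and "\<And>q. q \<in> set ps \<Longrightarrow> count_list ps q = 2"
  shows "has_bochner_integral (\<Pi>\<^sub>M i\<in>I. std_normal) (\<lambda>w. prod_list (map w ps)) 1"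
proof -
  have "(\<integral>t. t ^ count_list ps q \<partial>std_normal) = 1" for q
    using assms(2)[of q] count_notin[of q ps]
    by (cases "q \<in> set ps") (simp_all add: integral_std_normal_square measure_std_normal_UNIV)
  then show ?thesis using has_bochner_integral_gauss_monomial[OF assms(1)] by simp
qed

end

definition gauss_index :: "nat \<Rightarrow> nat \<Rightarrow> (bool \<times> nat \<times> nat) set" where
  "gauss_index n nk = UNIV \<times> {..<n} \<times> {..<nk}"

lemma finite_gauss_index: "finite (gauss_index n nk)"
  by (simp add: gauss_index_def)

lemma gauss_weights_eq_PiM: "gauss_weights n nk = (\<Pi>\<^sub>M p\<in>gauss_index n nk. std_normal)"
  by (simp add: gauss_weights_def gauss_index_def)

lemma prob_space_gauss_weights: "prob_space (gauss_weights n nk)"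
  unfolding gauss_weights_eq_PiM by (intro prob_space_PiM prob_space_std_normal)

lemma has_bochner_integral_gauss_weights_const:
  fixes c :: real
  shows "has_bochner_integral (gauss_weights n nk) (\<lambda>_. c) c"
proof -
  interpret prob_space "gauss_weights n nk" by (rule prob_space_gauss_weights)
  show ?thesis using lebesgue_integral_const[of _ c] by (simp add: has_bochner_integral_iff prob_space)
qed

lemma has_bochner_integral_key_query:
  assumes "i < n" "j < n" "k < nk" "k' < nk"
  shows "has_bochner_integral (gauss_weights n nk) (\<lambda>w. w (True, i, k) * w (False, j, k')) 0"
  using has_bochner_integral_gauss_monomial_odd[OF finite_gauss_index,
      where ps = "[(True, i, k), (False, j, k')]" and q = "(True, i, k)"] assms by (simp add: gauss_weights_eq_PiM gauss_index_def)

lemma has_bochner_integral_key_query_key_query: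
  assumes "i < n" "j < n" "i' < n" "j' < n" "k < nk" "k' < nk"
  shows "has_bochner_integral (gauss_weights n nk)
           (\<lambda>w. w (True, i, k) * w (False, j, k) * w (True, i', k') * w (False, j', k'))
           (of_bool (i = i' \<and> j = j' \<and> k = k'))"
proof -
  define ps where "ps = [(True, i, k), (False, j, k), (True, i', k'), (False, j', k')]"
  have ps: "set ps \<subseteq> gauss_index n nk"
    using assms by (auto simp: ps_def gauss_index_def)
  have prod_ps: "prod_list (map w ps) = w (True, i, k) * w (False, j, k) * w (True, i', k') * w (False, j', k')" for w :: "_ \<Rightarrow> real"
    by (simp add: ps_def mult_ac)
  show ?thesis
  proof (cases "i = i' \<and> j = j' \<and> k = k'")
    case True
    then have "count_list ps q = 2" if "q \<in> set ps" for q
      using that by (auto simp: ps_def)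
    with True show ?thesis
      using has_bochner_integral_gauss_monomial_pairs[OF finite_gauss_index ps]
      by (simp add: gauss_weights_eq_PiM prod_ps)
  next
    case False
    then obtain q where "odd (count_list ps q)"
      by (cases "(i, k) = (i', k')") (auto simp: ps_def intro: that[of "(True, i, k)"] that[of "(False, j, k)"])
    then have "has_bochner_integral (gauss_weights n nk) (\<lambda>w. prod_list (map w ps)) 0"
      using has_bochner_integral_gauss_monomial_odd[OF finite_gauss_index ps]
      by (simp add: gauss_weights_eq_PiM)
    moreover have "of_bool (i = i' \<and> j = j' \<and> k = k') = (0::real)"
      using False by simp
    ultimately show ?thesis
      by (simp only: prod_ps)
  qed
qed

section \<open>The bilinear form \<open>Y\<close> and its moments\<close>

(* Y with the two copies of X decoupled, so that centring can act on one side only. *)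
definition Yform :: "nat \<Rightarrow> nat \<Rightarrow> (nat \<Rightarrow> nat \<Rightarrow> real) \<Rightarrow> (nat \<Rightarrow> nat \<Rightarrow> real)
                     \<Rightarrow> (bool \<times> nat \<times> nat \<Rightarrow> real) \<Rightarrow> nat \<Rightarrow> nat \<Rightarrow> real" where
  "Yform n nk P Q w a b =
     (\<Sum>i<n. \<Sum>j<n. \<Sum>k<nk. P a i * Q b j / real n * (w (True, i, k) * w (False, j, k)))"

definition gram :: "nat \<Rightarrow> (nat \<Rightarrow> nat \<Rightarrow> real) \<Rightarrow> (nat \<Rightarrow> nat \<Rightarrow> real) \<Rightarrow> nat \<Rightarrow> nat \<Rightarrow> real" where
  "gram n P Q a c = (\<Sum>i<n. P a i * Q c i) / real n"

lemma Ymat_eq_Yform: "Ymat n nk X w = Yform n nk X X w"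
  by (intro ext) (simp add: Ymat_def Yform_def WK_def WQ_def sum_distrib_left mult_ac)

lemma Vmat_eq_gram: "Vmat n X = gram n X X"
  by (intro ext) (simp add: Vmat_def gram_def)

lemma has_bochner_integral_Yform: "has_bochner_integral (gauss_weights n nk) (\<lambda>w. Yform n nk P Q w a b) 0"
proof -
  have "has_bochner_integral (gauss_weights n nk) (\<lambda>w. Yform n nk P Q w a b)
          (\<Sum>i<n. \<Sum>j<n. \<Sum>k<nk. P a i * Q b j / real n * 0)"
    unfolding Yform_def
    by (intro has_bochner_integral_sum has_bochner_integral_mult_right) (auto intro: has_bochner_integral_key_query)
  then show ?thesis by simp
qed

lemma has_bochner_integral_Yform_mult:
  "has_bochner_integral (gauss_weights n nk) (\<lambda>w. Yform n nk P Q w a b * Yform n nk R S w c d)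
     (real nk * gram n P R a c * gram n Q S b d)"
proof -
  define coeff where
    "coeff i j i' j' = P a i * Q b j / real n * (R c i' * S d j' / real n)" for i j i' j'
  have expand: "Yform n nk P Q w a b * Yform n nk R S w c d =
      (\<Sum>i<n. \<Sum>j<n. \<Sum>k<nk. \<Sum>i'<n. \<Sum>j'<n. \<Sum>k'<nk.
         coeff i j i' j' * (w (True, i, k) * w (False, j, k) * w (True, i', k') * w (False, j', k')))" for w
    unfolding Yform_def sum_distrib_right unfolding sum_distrib_left coeff_def
    by (intro sum.cong refl) (simp add: mult_ac)
  have "has_bochner_integral (gauss_weights n nk) (\<lambda>w. Yform n nk P Q w a b * Yform n nk R S w c d)
      (\<Sum>i<n. \<Sum>j<n. \<Sum>k<nk. \<Sum>i'<n. \<Sum>j'<n. \<Sum>k'<nk.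
         coeff i j i' j' * of_bool (i = i' \<and> j = j' \<and> k = k'))"
    unfolding expand
    by (intro has_bochner_integral_sum has_bochner_integral_mult_right has_bochner_integral_key_query_key_query) auto
  also have "(\<Sum>i<n. \<Sum>j<n. \<Sum>k<nk. \<Sum>i'<n. \<Sum>j'<n. \<Sum>k'<nk.
         coeff i j i' j' * of_bool (i = i' \<and> j = j' \<and> k = k')) = (\<Sum>i<n. \<Sum>j<n. \<Sum>k<nk. coeff i j i j)"
    by (intro sum.cong refl sum_delta3) auto
  also have "\<dots> = real nk * gram n P R a c * gram n Q S b d"
    by (simp add: coeff_def gram_def sum_distrib_left sum_distrib_right sum_divide_distrib mult_ac)
  finally show ?thesis .
qed

definition center :: "nat \<Rightarrow> (nat \<Rightarrow> nat \<Rightarrow> real) \<Rightarrow> nat \<Rightarrow> nat \<Rightarrow> real" where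
  "center m X b j = X b j - (\<Sum>c<m. X c j) / real m"

lemma Yform_eq_sum_right:
  "Yform n nk P Q w a b = (\<Sum>j<n. Q b j * (\<Sum>i<n. \<Sum>k<nk. P a i / real n * (w (True, i, k) * w (False, j, k))))"
  unfolding Yform_def sum_distrib_left by (subst sum.swap) (simp add: mult_ac)

lemma Yform_center_right:
  "Yform n nk P (center m Q) w a d = Yform n nk P Q w a d - (\<Sum>c<m. Yform n nk P Q w a c) / real m"
  unfolding Yform_eq_sum_right center_def
  by (simp add: left_diff_distrib sum_subtractf sum_divide_distrib sum_distrib_right sum.swap[of _ "{..<m}"])

lemma gram_mean_right: "(\<Sum>i<n. X d i * ((\<Sum>c<m. X c i) / real m)) / real n = Vxbar m n X d"
  by (simp add: Vxbar_def Vmat_def sum_distrib_left sum_divide_distrib mult_ac sum.swap[of _ "{..<n}"])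

lemma gram_mean_mean:
  "(\<Sum>i<n. ((\<Sum>c<m. X c i) / real m) * ((\<Sum>c<m. X c i) / real m)) / real n = Vxbarxbar m n X"
  by (simp add: Vxbarxbar_def Vmat_def sum_distrib_left sum_distrib_right sum_divide_distrib
      power2_eq_square mult_ac sum.swap[of _ "{..<n}"])

lemma gram_center:
  "gram n (center m X) (center m X) d e = Vmat n X d e - Vxbar m n X d - Vxbar m n X e + Vxbarxbar m n X"
proof -
  define xbar where "xbar i = (\<Sum>c<m. X c i) / real m" for i
  have "gram n (center m X) (center m X) d e = (\<Sum>i<n. (X d i - xbar i) * (X e i - xbar i)) / real n"
    by (simp add: gram_def center_def xbar_def)
  also have "\<dots> = (\<Sum>i<n. X d i * X e i) / real n - (\<Sum>i<n. X d i * xbar i) / real n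
       - (\<Sum>i<n. X e i * xbar i) / real n + (\<Sum>i<n. xbar i * xbar i) / real n"
    by (simp add: algebra_simps sum_subtractf sum.distrib add_divide_distrib diff_divide_distrib)
  also have "\<dots> = Vmat n X d e - Vxbar m n X d - Vxbar m n X e + Vxbarxbar m n X"
    unfolding xbar_def gram_mean_right gram_mean_mean by (simp add: Vmat_def)
  finally show ?thesis .
qed

lemma sum_Vxbar: "(\<Sum>c<m. Vxbar m n X c) / real m = Vxbarxbar m n X"
  by (simp add: Vxbar_def Vxbarxbar_def sum_distrib_left sum_divide_distrib power2_eq_square mult_ac)

lemma S2_eq_gram_center:
  "Vmat n X a a * (gram n (center m X) (center m X) d d
     - (\<Sum>c<m. gram n (center m X) (center m X) c c) / real m) = S2 m n X a d"
proof (cases "m = 0")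
  case True
  then show ?thesis by (simp add: gram_center S2_def Vxbar_def Vxbarxbar_def Vbar_def)
next
  case False
  have "(\<Sum>c<m. gram n (center m X) (center m X) c c) / real m
      = Vbar m n X - 2 * ((\<Sum>c<m. Vxbar m n X c) / real m) + Vxbarxbar m n X"
    using False by (simp add: gram_center Vbar_def sum.distrib sum_subtractf sum_distrib_left field_simps)
  then have mean_diag: "(\<Sum>c<m. gram n (center m X) (center m X) c c) / real m = Vbar m n X - Vxbarxbar m n X"
    by (simp add: sum_Vxbar)
  show ?thesis
    unfolding S2_def gram_center[of n m X d d] mean_diag by (simp add: algebra_simps)
qed

section \<open>Second-order expansion of the softmax\<close>

lemma exp_taylor2_remainder:
  fixes x :: real
  assumes "\<bar>x\<bar> \<le> 1"
  shows "\<bar>exp x - (1 + x + x\<^sup>2 / 2)\<bar> \<le> \<bar>x\<bar> ^ 3 / 2"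
proof -
  obtain t where t: "\<bar>t\<bar> \<le> \<bar>x\<bar>" "exp x = (\<Sum>k<3. x ^ k / fact k) + exp t / fact 3 * x ^ 3"
    using Maclaurin_exp_le[of x 3] by blast
  have "exp t \<le> 3"
    using t(1) assms exp_le by (meson abs_le_D1 exp_le_cancel_iff order_trans)
  then have "exp t / 6 * \<bar>x\<bar> ^ 3 \<le> 3 / 6 * \<bar>x\<bar> ^ 3"
    by (intro mult_right_mono divide_right_mono) auto
  moreover have "\<bar>exp x - (1 + x + x\<^sup>2 / 2)\<bar> = exp t / 6 * \<bar>x\<bar> ^ 3"
    using t(2) by (simp add: eval_nat_numeral fact_numeral abs_mult power_abs)
  ultimately show ?thesis by simp
qed

lemma softmax_shift:
  fixes z :: "nat \<Rightarrow> real"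
  shows "exp (z d) / (\<Sum>c<m. exp (z c)) = exp (z d - s) / (\<Sum>c<m. exp (z c - s))"
  by (simp add: exp_diff flip: sum_divide_distrib)

lemma sum_exp_ge:
  fixes y :: "nat \<Rightarrow> real"
  assumes "\<And>c. c < m \<Longrightarrow> \<bar>y c\<bar> \<le> 1"
  shows "real m / 3 \<le> (\<Sum>c<m. exp (y c))"
proof -
  have "1 / 3 \<le> exp (y c)" if "c < m" for c
  proof -
    have "1 / 3 \<le> exp (-1::real)"
      using exp_le by (simp add: exp_minus field_simps)
    also have "\<dots> \<le> exp (y c)"
      using assms[OF that] by simp
    finally show ?thesis .
  qed
  then have "(\<Sum>c<m. 1 / 3) \<le> (\<Sum>c<m. exp (y c))"
    by (intro sum_mono) simp
  then show ?thesis by simp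
qed

lemma mean_square_bounds:
  fixes y :: "nat \<Rightarrow> real"
  assumes "m > 0" "\<And>c. c < m \<Longrightarrow> \<bar>y c\<bar> \<le> r"
  shows "0 \<le> (\<Sum>c<m. (y c)\<^sup>2) / real m" "(\<Sum>c<m. (y c)\<^sup>2) / real m \<le> r\<^sup>2"
proof -
  have "(\<Sum>c<m. (y c)\<^sup>2) \<le> (\<Sum>c<m. r\<^sup>2)"
    using assms(2) by (intro sum_mono) (metis abs_ge_zero lessThan_iff power2_abs power_mono)
  then show "(\<Sum>c<m. (y c)\<^sup>2) / real m \<le> r\<^sup>2"
    using assms(1) by (simp add: field_simps)
qed (simp add: sum_nonneg)

lemma abs_square_sub_mean_square_le:
  fixes y :: "nat \<Rightarrow> real"
  assumes "m > 0" "d < m" "\<And>c. c < m \<Longrightarrow> \<bar>y c\<bar> \<le> r"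
  shows "\<bar>(y d)\<^sup>2 - (\<Sum>c<m. (y c)\<^sup>2) / real m\<bar> \<le> r\<^sup>2"
proof -
  have "(y d)\<^sup>2 \<le> r\<^sup>2"
    using assms(2,3) by (metis abs_ge_zero power2_abs power_mono)
  then show ?thesis
    using mean_square_bounds[where y = y and r = r, OF assms(1,3)] zero_le_power2[of "y d"]
    unfolding abs_le_iff by linarith
qed

(* The second-order Taylor coefficient of softmax(y)_d at y = 0, for centred y. *)
definition softmax_quad :: "nat \<Rightarrow> (nat \<Rightarrow> real) \<Rightarrow> nat \<Rightarrow> real" where
  "softmax_quad m y d = (y d ^ 2 - (\<Sum>c<m. y c ^ 2) / real m) / (2 * real m)"

lemma abs_softmax_quad_le:
  fixes y :: "nat \<Rightarrow> real"
  assumes "m > 0" "d < m" "\<And>c. c < m \<Longrightarrow> \<bar>y c\<bar> \<le> r"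
  shows "\<bar>softmax_quad m y d\<bar> \<le> r\<^sup>2"
proof -
  have "\<bar>softmax_quad m y d\<bar> = \<bar>(y d)\<^sup>2 - (\<Sum>c<m. (y c)\<^sup>2) / real m\<bar> / (2 * real m)"
    by (simp add: softmax_quad_def abs_div)
  also have "\<dots> \<le> r\<^sup>2 / (2 * real m)"
    using abs_square_sub_mean_square_le[OF assms] by (rule divide_right_mono) auto
  also have "\<dots> \<le> r\<^sup>2 / 1"
    using assms(1) by (intro divide_left_mono) auto
  finally show ?thesis by simp
qed

lemma softmax_taylor2_numerator:
  fixes y :: "nat \<Rightarrow> real"
  assumes "m > 0" "d < m" and centered: "(\<Sum>c<m. y c) = 0"
    and small: "\<And>c. c < m \<Longrightarrow> \<bar>y c\<bar> \<le> r" and "r \<le> 1"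
  defines "v \<equiv> (\<Sum>c<m. (y c)\<^sup>2) / real m"
  shows "\<bar>exp (y d) - (1 + y d + ((y d)\<^sup>2 - v) / 2) / real m * (\<Sum>c<m. exp (y c))\<bar> \<le> 3 * r ^ 3"
proof -
  define E where "E x = exp x - (1 + x + x\<^sup>2 / 2)" for x :: real
  define t where "t = 1 + y d + ((y d)\<^sup>2 - v) / 2"
  have M: "1 \<le> real m" using assms(1) by simp
  have r: "0 \<le> r" "r\<^sup>2 \<le> 1" "r ^ 4 \<le> r ^ 3"
    using small[OF assms(2)] \<open>r \<le> 1\<close> by (auto simp: power_le_one power_decreasing)
  have E: "\<bar>E (y c)\<bar> \<le> r ^ 3 / 2" if "c < m" for c
    using exp_taylor2_remainder[of "y c"] power_mono[OF small[OF that] abs_ge_zero, of 3] small[OF that] \<open>r \<le> 1\<close>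
    unfolding E_def by linarith
  have v: "0 \<le> v" "v \<le> r\<^sup>2" "\<bar>(y d)\<^sup>2 - v\<bar> \<le> r\<^sup>2"
    using mean_square_bounds[OF assms(1) small] abs_square_sub_mean_square_le[OF assms(1,2) small]
    by (simp_all add: v_def)
  define SE where "SE = (\<Sum>c<m. E (y c))"
  \<comment> \<open>Since \<open>y\<close> is centred, the first-order terms cancel in the denominator.\<close>
  have "SE = (\<Sum>c<m. exp (y c)) - real m - (\<Sum>c<m. y c) - (\<Sum>c<m. (y c)\<^sup>2) / 2"
    by (simp add: SE_def E_def sum.distrib sum_subtractf sum_divide_distrib)
  moreover have "real m * (1 + v / 2) = real m + (\<Sum>c<m. (y c)\<^sup>2) / 2"
    using M by (simp add: v_def field_simps)
  ultimately have denominator: "(\<Sum>c<m. exp (y c)) = real m * (1 + v / 2) + SE"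
    using centered by linarith
  have "exp (y d) - t / real m * (\<Sum>c<m. exp (y c))
      = E (y d) - t / real m * SE - v / 2 * (y d + ((y d)\<^sup>2 - v) / 2)"
    unfolding denominator using M by (simp add: E_def t_def field_simps power2_eq_square)
  also have "\<bar>\<dots>\<bar> \<le> r ^ 3 / 2 + 3 / real m * (real m * (r ^ 3 / 2)) + r\<^sup>2 / 2 * (r + r\<^sup>2 / 2)"
  proof -
    have "\<bar>t\<bar> \<le> 3"
      using small[OF assms(2)] v r(2) \<open>r \<le> 1\<close> unfolding t_def abs_le_iff diff_divide_distrib by linarith
    then have "\<bar>t / real m\<bar> \<le> 3 / real m"
      by (simp add: abs_div divide_right_mono)
    then have "\<bar>t / real m * SE\<bar> \<le> 3 / real m * (real m * (r ^ 3 / 2))"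
      using abs_sum_le_card_mult[of m "\<lambda>c. E (y c)", OF E, folded SE_def] by (rule abs_mult_mono)
    moreover have "\<bar>v / 2 * (y d + ((y d)\<^sup>2 - v) / 2)\<bar> \<le> r\<^sup>2 / 2 * (r + r\<^sup>2 / 2)"
      using v small[OF assms(2)] r by (intro abs_mult_mono) (auto simp: abs_le_iff diff_divide_distrib)
    ultimately show ?thesis
      using E[OF assms(2)] unfolding abs_le_iff by linarith
  qed
  also have "\<dots> = 5 / 2 * r ^ 3 + r ^ 4 / 4"
    using M by (simp add: field_simps eval_nat_numeral)
  also have "\<dots> \<le> 3 * r ^ 3"
    using r(3) zero_le_power[OF r(1), of 3] by linarith
  finally show ?thesis unfolding t_def .
qed

lemma softmax_taylor2:
  fixes y :: "nat \<Rightarrow> real"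
  assumes "m > 0" "d < m" and centered: "(\<Sum>c<m. y c) = 0"
    and small: "\<And>c. c < m \<Longrightarrow> \<bar>y c\<bar> \<le> r" and "r \<le> 1"
  shows "\<bar>exp (y d) / (\<Sum>c<m. exp (y c)) - (1 / real m + y d / real m + softmax_quad m y d)\<bar> \<le> 9 * r ^ 3"
proof -
  define S where "S = (\<Sum>c<m. exp (y c))"
  define T where "T = 1 / real m + y d / real m + softmax_quad m y d"
  have M: "1 \<le> real m" using assms(1) by simp
  have r: "0 \<le> r" using small[OF assms(2)] by linarith
  have S: "real m / 3 \<le> S"
    unfolding S_def using small \<open>r \<le> 1\<close> by (intro sum_exp_ge) (meson order_trans)
  have "T = (1 + y d + ((y d)\<^sup>2 - (\<Sum>c<m. (y c)\<^sup>2) / real m) / 2) / real m"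
    using M by (simp add: T_def softmax_quad_def field_simps)
  then have num: "\<bar>exp (y d) - T * S\<bar> \<le> 3 * r ^ 3"
    using softmax_taylor2_numerator[OF assms] by (simp add: S_def)
  have "\<bar>exp (y d) / S - T\<bar> = \<bar>exp (y d) - T * S\<bar> / S"
    using S M by (simp add: field_simps)
  also have "\<dots> \<le> 3 * r ^ 3 / (real m / 3)"
    using num S M r by (intro frac_le) auto
  also have "\<dots> \<le> 9 * r ^ 3"
    using mult_right_mono[OF M zero_le_power[OF r, of 3]] M by (simp add: field_simps)
  finally show ?thesis by (simp add: S_def T_def)
qed

lemma second_order_product_bound:
  fixes A1 A2 d1 d2 l1 l2 q1 q2 r :: real
  assumes d: "\<bar>d1\<bar> \<le> 1" "\<bar>d2\<bar> \<le> 1" and A: "\<bar>A1\<bar> \<le> 2" "\<bar>A2\<bar> \<le> 2"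
    and l: "\<bar>l1\<bar> \<le> r" "\<bar>l2\<bar> \<le> r" and q: "\<bar>q1\<bar> \<le> r\<^sup>2" "\<bar>q2\<bar> \<le> r\<^sup>2"
    and taylor: "r \<le> 1 \<Longrightarrow> \<bar>A1 - (d1 + l1 + q1)\<bar> \<le> 9 * r ^ 3"
                "r \<le> 1 \<Longrightarrow> \<bar>A2 - (d2 + l2 + q2)\<bar> \<le> 9 * r ^ 3"
  shows "\<bar>A1 * A2 - (d1 * d2 + d2 * l1 + d1 * l2 + d2 * q1 + d1 * q2 + l1 * l2)\<bar> \<le> 48 * r ^ 3"
proof -
  have r: "0 \<le> r" using l(1) by linarith
  show ?thesis
  proof (cases "r \<le> 1")
    case True
    have powers: "r\<^sup>2 \<le> 1" "r ^ 4 \<le> r ^ 3"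
      using r True by (simp_all add: power_le_one power_decreasing)
    have T1: "\<bar>d1 + l1 + q1\<bar> \<le> 3"
      using d l q powers True unfolding abs_le_iff by linarith
    have expand: "A1 * A2 - (d1 * d2 + d2 * l1 + d1 * l2 + d2 * q1 + d1 * q2 + l1 * l2)
        = (A1 - (d1 + l1 + q1)) * A2 + (d1 + l1 + q1) * (A2 - (d2 + l2 + q2)) + l1 * q2 + q1 * l2 + q1 * q2"
      by (simp add: algebra_simps)
    have "\<bar>(A1 - (d1 + l1 + q1)) * A2\<bar> \<le> 9 * r ^ 3 * 2"
      using taylor(1)[OF True] A(2) by (rule abs_mult_mono)
    moreover have "\<bar>(d1 + l1 + q1) * (A2 - (d2 + l2 + q2))\<bar> \<le> 3 * (9 * r ^ 3)"
      using T1 taylor(2)[OF True] by (rule abs_mult_mono)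
    moreover have "\<bar>l1 * q2\<bar> \<le> r ^ 3" "\<bar>q1 * l2\<bar> \<le> r ^ 3" "\<bar>q1 * q2\<bar> \<le> r ^ 4"
      using abs_mult_mono[OF l(1) q(2)] abs_mult_mono[OF q(1) l(2)] abs_mult_mono[OF q(1) q(2)]
      by (simp_all add: eval_nat_numeral mult_ac)
    ultimately show ?thesis
      using powers unfolding expand abs_le_iff by linarith
  next
    case False
    have powers: "1 \<le> r ^ 3" "r \<le> r ^ 3" "r\<^sup>2 \<le> r ^ 3"
      using False one_le_power[of r 3] power_increasing[of 1 3 r] power_increasing[of 2 3 r] by simp_all
    have "\<bar>A1 * A2\<bar> \<le> 2 * 2" "\<bar>d1 * d2\<bar> \<le> 1 * 1" "\<bar>d2 * l1\<bar> \<le> 1 * r" "\<bar>d1 * l2\<bar> \<le> 1 * r"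
      "\<bar>d2 * q1\<bar> \<le> 1 * r\<^sup>2" "\<bar>d1 * q2\<bar> \<le> 1 * r\<^sup>2" "\<bar>l1 * l2\<bar> \<le> r * r"
      by (intro abs_mult_mono A d l q)+
    then show ?thesis
      using powers by (simp add: abs_le_iff power2_eq_square)
  qed
qed

section \<open>Domination of the remainder\<close>

definition gauss_dominator :: "nat \<Rightarrow> nat \<Rightarrow> (bool \<times> nat \<times> nat \<Rightarrow> real) \<Rightarrow> real" where
  "gauss_dominator n nk w = (\<Prod>p\<in>gauss_index n nk. 1 + (w p)\<^sup>2)"

lemma abs_le_one_plus_square: "\<bar>x::real\<bar> \<le> 1 + x\<^sup>2"
proof (cases "\<bar>x\<bar> \<le> 1")
  case False
  then have "\<bar>x\<bar> * 1 \<le> \<bar>x\<bar> * \<bar>x\<bar>" by (intro mult_left_mono) auto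
  then show ?thesis by (simp add: power2_eq_square abs_mult_self_eq)
qed (simp add: add_increasing2)

lemma abs_le_gauss_dominator:
  assumes "p \<in> gauss_index n nk"
  shows "\<bar>w p\<bar> \<le> gauss_dominator n nk w"
proof -
  have "1 \<le> (\<Prod>q\<in>gauss_index n nk - {p}. 1 + (w q)\<^sup>2)"
    by (intro prod_ge_1) simp
  then have "1 + (w p)\<^sup>2 \<le> (1 + (w p)\<^sup>2) * (\<Prod>q\<in>gauss_index n nk - {p}. 1 + (w q)\<^sup>2)"
    using mult_left_mono[of 1 _ "1 + (w p)\<^sup>2"] by simp
  also have "\<dots> = gauss_dominator n nk w"
    unfolding gauss_dominator_def using assms finite_gauss_index by (simp add: prod.remove)
  finally show ?thesis using abs_le_one_plus_square[of "w p"] by linarith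
qed

lemma integrable_gauss_dominator_power:
  "integrable (gauss_weights n nk) (\<lambda>w. gauss_dominator n nk w ^ l)"
proof -
  interpret product_prob_space "\<lambda>_. std_normal"
    by (simp add: product_prob_space_def product_prob_space_axioms_def product_sigma_finite_def
        prob_space_std_normal prob_space_imp_sigma_finite)
  have "(1 + t\<^sup>2) ^ l = (\<Sum>i\<le>l. of_nat (l choose i) * t ^ (2 * i))" for t :: real
    using binomial_ring[of "t\<^sup>2" 1 l] by (simp add: add.commute power_mult)
  then have "integrable std_normal (\<lambda>t. (1 + t\<^sup>2) ^ l)"
    by (simp add: integrable_std_normal_power)
  then show ?thesis
    using product_integrable_prod[of "gauss_index n nk" "\<lambda>_ t. (1 + t\<^sup>2) ^ l"] finite_gauss_index
    by (simp add: gauss_weights_eq_PiM gauss_dominator_def prod_power_distrib)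
qed

lemma abs_Yform_le:
  "\<bar>Yform n nk P Q w a b\<bar>
     \<le> (\<Sum>i<n. \<Sum>j<n. \<Sum>k<nk. \<bar>P a i * Q b j / real n\<bar>) * gauss_dominator n nk w ^ 2"
proof -
  have "\<bar>Yform n nk P Q w a b\<bar>
      \<le> (\<Sum>i<n. \<Sum>j<n. \<Sum>k<nk. \<bar>P a i * Q b j / real n * (w (True, i, k) * w (False, j, k))\<bar>)"
    unfolding Yform_def
    by (intro order_trans[OF sum_abs] sum_mono)+ simp
  also have "\<dots> \<le> (\<Sum>i<n. \<Sum>j<n. \<Sum>k<nk. \<bar>P a i * Q b j / real n\<bar> * gauss_dominator n nk w ^ 2)"
  proof (intro sum_mono)
    fix i j k assume "i \<in> {..<n}" "j \<in> {..<n}" "k \<in> {..<nk}"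
    then have "\<bar>w (True, i, k) * w (False, j, k)\<bar> \<le> gauss_dominator n nk w * gauss_dominator n nk w"
      by (intro abs_mult_mono abs_le_gauss_dominator) (auto simp: gauss_index_def)
    then show "\<bar>P a i * Q b j / real n * (w (True, i, k) * w (False, j, k))\<bar>
        \<le> \<bar>P a i * Q b j / real n\<bar> * gauss_dominator n nk w ^ 2"
      unfolding abs_mult[of "P a i * Q b j / real n"] power2_eq_square by (intro mult_left_mono) auto
  qed
  finally show ?thesis by (simp only: sum_distrib_right)
qed

lemma Yform_dominated:
  "\<exists>K. \<forall>w a c. a < m \<longrightarrow> c < m \<longrightarrow> \<bar>Yform n nk P Q w a c\<bar> \<le> K * gauss_dominator n nk w ^ 2"
proof -
  define coeff where "coeff a c = (\<Sum>i<n. \<Sum>j<n. \<Sum>k<nk. \<bar>P a i * Q c j / real n\<bar>)" for a c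
  define K where "K = (\<Sum>a<m. \<Sum>c<m. coeff a c)"
  have coeff_nonneg: "0 \<le> coeff a c" for a c
    by (simp add: coeff_def sum_nonneg)
  have "coeff a c \<le> K" if "a < m" "c < m" for a c
  proof -
    have "coeff a c \<le> (\<Sum>c<m. coeff a c)"
      using that coeff_nonneg by (intro member_le_sum) auto
    also have "\<dots> \<le> K"
      unfolding K_def using that coeff_nonneg
      by (intro member_le_sum[of a "{..<m}" "\<lambda>a. \<Sum>c<m. coeff a c"] sum_nonneg) auto
    finally show ?thesis .
  qed
  then have "\<bar>Yform n nk P Q w a c\<bar> \<le> K * gauss_dominator n nk w ^ 2" if "a < m" "c < m" for w a c
    using order_trans[OF abs_Yform_le[of n nk P Q w a c, folded coeff_def]
        mult_right_mono[of "coeff a c" K "gauss_dominator n nk w ^ 2"]] that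
    by simp
  then show ?thesis by blast
qed

lemma borel_measurable_Amat: "(\<lambda>w. Amat m n nk X tau w a d) \<in> borel_measurable (gauss_weights n nk)"
proof -
  have "(\<lambda>w. Ymat n nk X w a c) \<in> borel_measurable (gauss_weights n nk)" for c
    using has_bochner_integral_Yform[of n nk X X a c] unfolding Ymat_eq_Yform
    by (intro borel_measurable_integrable integrable.intros)
  then show ?thesis
    unfolding Amat_def softmax_rows_def by measurable
qed

lemma abs_Amat_le:
  assumes "m > 0" "d < m"
  shows "\<bar>Amat m n nk X tau w a d\<bar> \<le> 2"
proof -
  define z where "z c = Ymat n nk X w a c / tau" for c
  have "0 < (\<Sum>c<m. exp (z c))"
    using assms by (intro sum_pos) auto
  moreover have "exp (z d) \<le> (\<Sum>c<m. exp (z c))"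
    using assms by (intro member_le_sum) auto
  ultimately have "0 \<le> exp (z d) / (\<Sum>c<m. exp (z c))" "exp (z d) / (\<Sum>c<m. exp (z c)) \<le> 1"
    by simp_all
  moreover have "0 \<le> kdelta a d" "kdelta a d \<le> 1" "0 < 1 / real m" "1 / real m \<le> 1"
    using assms by (auto simp: kdelta_def)
  ultimately show ?thesis
    unfolding Amat_def softmax_rows_def z_def[symmetric] abs_le_iff by linarith
qed

lemma integrable_Amat_mult:
  assumes "m > 0" "\<delta> < m" "\<omega> < m"
  shows "integrable (gauss_weights n nk) (\<lambda>w. Amat m n nk X tau w \<alpha> \<delta> * Amat m n nk X tau w \<beta> \<omega>)"
proof -
  interpret prob_space "gauss_weights n nk" by (rule prob_space_gauss_weights)
  show ?thesis
  proof (rule integrable_const_bound[where B = "2 * 2"])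
    have "\<bar>Amat m n nk X tau w \<alpha> \<delta> * Amat m n nk X tau w \<beta> \<omega>\<bar> \<le> 2 * 2" for w
      using assms by (intro abs_mult_mono abs_Amat_le)
    then show "AE w in gauss_weights n nk. norm (Amat m n nk X tau w \<alpha> \<delta> * Amat m n nk X tau w \<beta> \<omega>) \<le> 2 * 2"
      by simp
  qed (intro borel_measurable_times borel_measurable_Amat)
qed

section \<open>Second-order approximation of products of entries of \<open>A\<close>\<close>

(* z - mean z for the logits z = Y^{a\<cdot>}/\<tau> of row a; by softmax_shift both have the same softmax. *)
definition centered_logits ::
  "nat \<Rightarrow> nat \<Rightarrow> nat \<Rightarrow> (nat \<Rightarrow> nat \<Rightarrow> real) \<Rightarrow> real \<Rightarrow> (bool \<times> nat \<times> nat \<Rightarrow> real) \<Rightarrow> nat \<Rightarrow> nat \<Rightarrow> real" where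
  "centered_logits m n nk X tau w a c = Yform n nk X (center m X) w a c / tau"

lemma Amat_eq_centered_softmax:
  "Amat m n nk X tau w a d =
     kdelta a d + exp (centered_logits m n nk X tau w a d) / (\<Sum>c<m. exp (centered_logits m n nk X tau w a c))
     - 1 / real m"
proof -
  define s where "s = (\<Sum>c<m. Ymat n nk X w a c / tau) / real m"
  have "centered_logits m n nk X tau w a c = Ymat n nk X w a c / tau - s" for c
    by (simp add: centered_logits_def s_def Yform_center_right Ymat_eq_Yform diff_divide_distrib
        flip: sum_divide_distrib)
  then show ?thesis
    unfolding Amat_def softmax_rows_def
    by (simp only: softmax_shift[of "\<lambda>c. Ymat n nk X w a c / tau" d m s])
qed

lemma sum_centered_logits:
  assumes "m > 0"
  shows "(\<Sum>c<m. centered_logits m n nk X tau w a c) = 0"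
  using assms by (simp add: centered_logits_def Yform_center_right sum_subtractf flip: sum_divide_distrib)

lemma has_bochner_integral_centered_logits:
  "has_bochner_integral (gauss_weights n nk) (\<lambda>w. centered_logits m n nk X tau w a d) 0"
  using has_bochner_integral_divide_zero[OF has_bochner_integral_Yform] by (simp add: centered_logits_def)

lemma has_bochner_integral_centered_logits_mult:
  "has_bochner_integral (gauss_weights n nk)
     (\<lambda>w. centered_logits m n nk X tau w a d * centered_logits m n nk X tau w b e)
     (real nk / tau\<^sup>2 * Vmat n X a b * gram n (center m X) (center m X) d e)"
  using has_bochner_integral_divide_zero[OF has_bochner_integral_Yform_mult, of n nk X "center m X" a d X "center m X" b e "tau\<^sup>2"]
  by (simp add: centered_logits_def Vmat_eq_gram power2_eq_square)

lemma has_bochner_integral_softmax_quad: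
  "has_bochner_integral (gauss_weights n nk) (\<lambda>w. softmax_quad m (centered_logits m n nk X tau w a) d)
     (real nk / (2 * tau\<^sup>2 * real m) * S2 m n X a d)"
proof -
  define K where "K = real nk / tau\<^sup>2 * Vmat n X a a"
  let ?g = "\<lambda>c. gram n (center m X) (center m X) c c"
  have "has_bochner_integral (gauss_weights n nk) (\<lambda>w. softmax_quad m (centered_logits m n nk X tau w a) d)
      ((K * ?g d - (\<Sum>c<m. K * ?g c) / real m) / (2 * real m))"
    unfolding softmax_quad_def power2_eq_square[of "centered_logits _ _ _ _ _ _ _ _"] K_def
    by (intro has_bochner_integral_divide_zero has_bochner_integral_diff has_bochner_integral_sum
        has_bochner_integral_centered_logits_mult)
  also have "(K * ?g d - (\<Sum>c<m. K * ?g c) / real m) / (2 * real m) = real nk / (2 * tau\<^sup>2 * real m) * S2 m n X a d"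
    unfolding S2_eq_gram_center[symmetric] sum_distrib_left[symmetric] K_def by (simp add: field_split_simps)
  finally show ?thesis .
qed

(* The terms of order at most \<tau>^-2 in the product of the second-order expansions of
   A^{\<alpha>\<delta>} and A^{\<beta>\<omega>}; the dropped products (linear times quadratic, quadratic times quadratic) are O(\<tau>^-3). *)
definition Aprod_second_order ::
  "nat \<Rightarrow> nat \<Rightarrow> nat \<Rightarrow> (nat \<Rightarrow> nat \<Rightarrow> real) \<Rightarrow> real \<Rightarrow> (bool \<times> nat \<times> nat \<Rightarrow> real)
   \<Rightarrow> nat \<Rightarrow> nat \<Rightarrow> nat \<Rightarrow> nat \<Rightarrow> real" where
  "Aprod_second_order m n nk X tau w \<alpha> \<delta> \<beta> \<omega> =
     (let l1 = centered_logits m n nk X tau w \<alpha> \<delta> / real m;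
          l2 = centered_logits m n nk X tau w \<beta> \<omega> / real m;
          q1 = softmax_quad m (centered_logits m n nk X tau w \<alpha>) \<delta>;
          q2 = softmax_quad m (centered_logits m n nk X tau w \<beta>) \<omega>
      in kdelta \<alpha> \<delta> * kdelta \<beta> \<omega> + kdelta \<beta> \<omega> * l1 + kdelta \<alpha> \<delta> * l2
         + kdelta \<beta> \<omega> * q1 + kdelta \<alpha> \<delta> * q2 + l1 * l2)"

lemma has_bochner_integral_Aprod_second_order:
  "has_bochner_integral (gauss_weights n nk) (\<lambda>w. Aprod_second_order m n nk X tau w \<alpha> \<delta> \<beta> \<omega>)
     (kdelta \<alpha> \<delta> * kdelta \<beta> \<omega>
      + real nk / (tau\<^sup>2 * (real m)\<^sup>2) * S1 m n X \<alpha> \<delta> \<beta> \<omega>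
      + real nk / (2 * tau\<^sup>2 * real m) * (kdelta \<beta> \<omega> * S2 m n X \<alpha> \<delta> + kdelta \<alpha> \<delta> * S2 m n X \<beta> \<omega>))"
proof -
  have lin_lin: "has_bochner_integral (gauss_weights n nk)
      (\<lambda>w. centered_logits m n nk X tau w \<alpha> \<delta> / real m * (centered_logits m n nk X tau w \<beta> \<omega> / real m))
      (real nk / (tau\<^sup>2 * (real m)\<^sup>2) * S1 m n X \<alpha> \<delta> \<beta> \<omega>)"
    using has_bochner_integral_divide_zero[where c = "(real m)\<^sup>2", OF has_bochner_integral_centered_logits_mult[
        where m = m and n = n and nk = nk and X = X and tau = tau and a = \<alpha> and d = \<delta> and b = \<beta>
          and e = \<omega>]]
    by (simp add: S1_def gram_center power2_eq_square mult_ac)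
  have "has_bochner_integral (gauss_weights n nk) (\<lambda>w. Aprod_second_order m n nk X tau w \<alpha> \<delta> \<beta> \<omega>)
      (kdelta \<alpha> \<delta> * kdelta \<beta> \<omega> + kdelta \<beta> \<omega> * (0 / real m) + kdelta \<alpha> \<delta> * (0 / real m)
       + kdelta \<beta> \<omega> * (real nk / (2 * tau\<^sup>2 * real m) * S2 m n X \<alpha> \<delta>)
       + kdelta \<alpha> \<delta> * (real nk / (2 * tau\<^sup>2 * real m) * S2 m n X \<beta> \<omega>)
       + real nk / (tau\<^sup>2 * (real m)\<^sup>2) * S1 m n X \<alpha> \<delta> \<beta> \<omega>)"
    unfolding Aprod_second_order_def Let_def
    by (intro has_bochner_integral_add has_bochner_integral_mult_right has_bochner_integral_divide_zero
        has_bochner_integral_gauss_weights_const has_bochner_integral_centered_logits has_bochner_integral_softmax_quad lin_lin)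
  then show ?thesis
    by (simp add: algebra_simps)
qed

lemma abs_Amat_mult_sub_Aprod_second_order_le:
  assumes "m > 0" "\<alpha> < m" "\<delta> < m" "\<beta> < m" "\<omega> < m"
    and small: "\<And>a c. a < m \<Longrightarrow> c < m \<Longrightarrow> \<bar>centered_logits m n nk X tau w a c\<bar> \<le> r"
  shows "\<bar>Amat m n nk X tau w \<alpha> \<delta> * Amat m n nk X tau w \<beta> \<omega> - Aprod_second_order m n nk X tau w \<alpha> \<delta> \<beta> \<omega>\<bar>
    \<le> 48 * r ^ 3"
proof -
  let ?y = "centered_logits m n nk X tau w"
  have taylor: "\<bar>Amat m n nk X tau w a d - (kdelta a d + ?y a d / real m + softmax_quad m (?y a) d)\<bar> \<le> 9 * r ^ 3"
    if "a < m" "d < m" "r \<le> 1" for a d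
    using softmax_taylor2[OF assms(1) \<open>d < m\<close> sum_centered_logits[OF assms(1)] small[OF \<open>a < m\<close>] \<open>r \<le> 1\<close>]
    by (simp add: Amat_eq_centered_softmax algebra_simps)
  have lin: "\<bar>?y a d / real m\<bar> \<le> r" if "a < m" "d < m" for a d
  proof -
    have "\<bar>?y a d\<bar> / real m \<le> \<bar>?y a d\<bar> / 1"
      using assms(1) by (intro divide_left_mono) auto
    then show ?thesis using small[OF that] by (simp add: abs_div)
  qed
  show ?thesis
    unfolding Aprod_second_order_def Let_def
    by (rule second_order_product_bound)
      (use assms taylor lin abs_softmax_quad_le[OF assms(1) _ small] abs_Amat_le in \<open>auto simp: kdelta_def\<close>)
qed

lemma abs_integral_Amat_mult_sub_le:
  assumes "m > 0" "\<alpha> < m" "\<delta> < m" "\<beta> < m" "\<omega> < m" "tau > 0"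
    and dominated: "\<And>w a c. a < m \<Longrightarrow> c < m \<Longrightarrow> \<bar>Yform n nk X (center m X) w a c\<bar> \<le> K * gauss_dominator n nk w ^ 2"
  shows "\<bar>(\<integral>w. Amat m n nk X tau w \<alpha> \<delta> * Amat m n nk X tau w \<beta> \<omega> \<partial>gauss_weights n nk)
      - (\<integral>w. Aprod_second_order m n nk X tau w \<alpha> \<delta> \<beta> \<omega> \<partial>gauss_weights n nk)\<bar>
    \<le> 48 * K ^ 3 / tau ^ 3 * (\<integral>w. gauss_dominator n nk w ^ 6 \<partial>gauss_weights n nk)"
proof -
  let ?D = "gauss_dominator n nk"
  have "\<bar>Amat m n nk X tau w \<alpha> \<delta> * Amat m n nk X tau w \<beta> \<omega> - Aprod_second_order m n nk X tau w \<alpha> \<delta> \<beta> \<omega>\<bar>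
      \<le> 48 * K ^ 3 / tau ^ 3 * ?D w ^ 6" for w
  proof -
    have "\<bar>centered_logits m n nk X tau w a c\<bar> \<le> K * ?D w ^ 2 / tau" if "a < m" "c < m" for a c
      using dominated[OF that] \<open>tau > 0\<close> by (simp add: centered_logits_def abs_div divide_right_mono)
    then have "\<bar>Amat m n nk X tau w \<alpha> \<delta> * Amat m n nk X tau w \<beta> \<omega> - Aprod_second_order m n nk X tau w \<alpha> \<delta> \<beta> \<omega>\<bar>
        \<le> 48 * (K * ?D w ^ 2 / tau) ^ 3"
      by (rule abs_Amat_mult_sub_Aprod_second_order_le[OF assms(1-5)])
    also have "\<dots> = 48 * K ^ 3 / tau ^ 3 * ?D w ^ 6"
      by (simp add: power_divide power_mult_distrib flip: power_mult)
    finally show ?thesis .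
  qed
  then have "\<bar>(\<integral>w. Amat m n nk X tau w \<alpha> \<delta> * Amat m n nk X tau w \<beta> \<omega> \<partial>gauss_weights n nk)
      - (\<integral>w. Aprod_second_order m n nk X tau w \<alpha> \<delta> \<beta> \<omega> \<partial>gauss_weights n nk)\<bar>
    \<le> (\<integral>w. 48 * K ^ 3 / tau ^ 3 * ?D w ^ 6 \<partial>gauss_weights n nk)"
    using assms integrable_Amat_mult has_bochner_integral_Aprod_second_order integrable_gauss_dominator_power
    by (intro abs_integral_diff_le_integral) (auto simp: has_bochner_integral_iff)
  then show ?thesis by simp
qed

theorem lemmaC3:
  fixes m n nk :: nat and X :: "nat \<Rightarrow> nat \<Rightarrow> real" and \<alpha> \<delta> \<beta> \<omega> :: nat
  assumes "m > 0" and "n > 0" and "nk > 0"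
    and "\<alpha> < m" and "\<delta> < m" and "\<beta> < m" and "\<omega> < m"
  shows "\<exists>C. \<forall>\<^sub>F tau in at_top.
     \<bar>(\<integral>w. Amat m n nk X tau w \<alpha> \<delta> * Amat m n nk X tau w \<beta> \<omega> \<partial>gauss_weights n nk)
      - (kdelta \<alpha> \<delta> * kdelta \<beta> \<omega>
         + real nk / (tau^2 * (real m)^2) * S1 m n X \<alpha> \<delta> \<beta> \<omega>
         + real nk / (2 * tau^2 * real m) *
             (kdelta \<beta> \<omega> * S2 m n X \<alpha> \<delta> + kdelta \<alpha> \<delta> * S2 m n X \<beta> \<omega>))\<bar>
     \<le> C * real nk / tau^3"
proof -
  obtain K where dominated:
      "\<forall>w a c. a < m \<longrightarrow> c < m \<longrightarrow> \<bar>Yform n nk X (center m X) w a c\<bar> \<le> K * gauss_dominator n nk w ^ 2"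
    using Yform_dominated by blast
  define G where "G = (\<integral>w. gauss_dominator n nk w ^ 6 \<partial>gauss_weights n nk)"
  show ?thesis
  proof (intro exI eventually_mono[OF eventually_gt_at_top[of 0]])
    fix tau :: real
    assume "tau > 0"
    from abs_integral_Amat_mult_sub_le[OF assms(1,4-7) this] dominated
    show "\<bar>(\<integral>w. Amat m n nk X tau w \<alpha> \<delta> * Amat m n nk X tau w \<beta> \<omega> \<partial>gauss_weights n nk)
      - (kdelta \<alpha> \<delta> * kdelta \<beta> \<omega>
         + real nk / (tau^2 * (real m)^2) * S1 m n X \<alpha> \<delta> \<beta> \<omega>
         + real nk / (2 * tau^2 * real m) *
             (kdelta \<beta> \<omega> * S2 m n X \<alpha> \<delta> + kdelta \<alpha> \<delta> * S2 m n X \<beta> \<omega>))\<bar>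
      \<le> 48 * K ^ 3 * G / real nk * real nk / tau^3"
      using assms(3) has_bochner_integral_Aprod_second_order[THEN has_bochner_integral_integral_eq]
      by (simp add: G_def)
  qed
qed

end
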